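(* Let $G$ be a paratopological group with unit $e$. For every neighborhood $U\subset G$ of $e$ there is a left-invariant $\overline{\mathsf{dist}}$-continuous quasi-pseudometric $d:G\times G\to[0,1]$ whose regularization satisfies $\overline d=\overline d^\circ$ and is a left-invariant right-continuous $\overline{\mathsf{dist}}$-continuous quasi-pseudometric, such that $B_d(x;1)\subset xU$ and $B_{\overline d}(x,1)\subset x\,\mathrm{int}\,\overline{U}$ for every $x\in G$. If $G$ is balanced, then $d$ and $\overline d=\overline d^\circ$ are invariant.
   Context: A paratopological group is a group with a topology making multiplication $G\times G\to G$ continuous (inversion need not be continuous). $G$ is balanced if $e$ has a neighborhood base of open sets $V$ with $xV=Vx$ for all $x\in G$. A quasi-pseudometric is $d:G\times G\to[0,\infty)$ with $d(x,x)=0$ and $d(x,z)\le d(x,y)+d(y,z)$; left-invariant if $d(zx,zy)=d(x,y)$, right-invariant if $d(xz,yz)=d(x,y)$, invariant if both. $B_d(x,\varepsilon)=\{y:d(x,y)<\varepsilon\}$, $B_d(A,\varepsilon)=\bigcup_{a\in A}B_d(a,\varepsilon)$. Right-continuous: $y\mapsto d(x,y)$ continuous for each $x$. For non-empty $A$: $\overline d_A(x)=\inf\{\varepsilon>0:x\in\overline{B_d(A,\varepsilon)}\}$, $\overline d^\circ_A(x)=\inf\{\varepsilon>0:x\in B_d(A,\varepsilon)\cup\mathrm{int}\,\overline{B_d(A,\varepsilon)}\}$; $d$ is $\overline{\mathsf{dist}}$-continuous if every $\overline d_A$ is continuous. $\overline d(x,y)=\overline d_{\{x\}}(y)$ and $\overline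 d^\circ(x,y)=\overline d^\circ_{\{x\}}(y)$. *)

theory Defs
  imports "HOL-Analysis.Analysis"
begin

text \<open>Groups are written additively via the (not necessarily commutative) type class
  group_add: the group product x y is x + y, the unit e is 0.\<close>

definition paratopological_group :: "'a::{topological_space,group_add} itself \<Rightarrow> bool" where
  "paratopological_group _ \<longleftrightarrow> continuous_on UNIV (\<lambda>p::'a \<times> 'a. fst p + snd p)"

definition balanced_group :: "'a::{topological_space,group_add} itself \<Rightarrow> bool" where
  "balanced_group _ \<longleftrightarrow>
     (\<forall>W::'a set. open W \<and> 0 \<in> W \<longrightarrow>
        (\<exists>V. open V \<and> 0 \<in> V \<and> V \<subseteq> W \<and> (\<forall>x. (\<lambda>v. x + v) ` V = (\<lambda>v. v + x) ` V)))"

definition quasi_pseudometric :: "('a \<Rightarrow> 'a \<Rightarrow> real) \<Rightarrow> bool" where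
  "quasi_pseudometric d \<longleftrightarrow> (\<forall>x y. 0 \<le> d x y) \<and> (\<forall>x. d x x = 0) \<and>
     (\<forall>x y z. d x z \<le> d x y + d y z)"

definition left_invariant :: "('a::group_add \<Rightarrow> 'a \<Rightarrow> real) \<Rightarrow> bool" where
  "left_invariant d \<longleftrightarrow> (\<forall>x y z. d (z + x) (z + y) = d x y)"

definition right_invariant :: "('a::group_add \<Rightarrow> 'a \<Rightarrow> real) \<Rightarrow> bool" where
  "right_invariant d \<longleftrightarrow> (\<forall>x y z. d (x + z) (y + z) = d x y)"

definition invariant :: "('a::group_add \<Rightarrow> 'a \<Rightarrow> real) \<Rightarrow> bool" where
  "invariant d \<longleftrightarrow> left_invariant d \<and> right_invariant d"

definition qball :: "('a \<Rightarrow> 'a \<Rightarrow> real) \<Rightarrow> 'a \<Rightarrow> real \<Rightarrow> 'a set" where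
  "qball d x e = {y. d x y < e}"

definition qball_set :: "('a \<Rightarrow> 'a \<Rightarrow> real) \<Rightarrow> 'a set \<Rightarrow> real \<Rightarrow> 'a set" where
  "qball_set d A e = (\<Union>a\<in>A. qball d a e)"

definition right_continuous :: "('a::topological_space \<Rightarrow> 'a \<Rightarrow> real) \<Rightarrow> bool" where
  "right_continuous d \<longleftrightarrow> (\<forall>x. continuous_on UNIV (d x))"

text \<open>The set of admissible epsilons is nonempty for nonempty A (any e > d a x works),
  and bounded below by 0, so the real infimum is the intended one.\<close>

definition dbar_set :: "('a::topological_space \<Rightarrow> 'a \<Rightarrow> real) \<Rightarrow> 'a set \<Rightarrow> 'a \<Rightarrow> real" where
  "dbar_set d A x = Inf {e. e > 0 \<and> x \<in> closure (qball_set d A e)}"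

definition dbar_circ_set :: "('a::topological_space \<Rightarrow> 'a \<Rightarrow> real) \<Rightarrow> 'a set \<Rightarrow> 'a \<Rightarrow> real" where
  "dbar_circ_set d A x =
     Inf {e. e > 0 \<and> x \<in> qball_set d A e \<union> interior (closure (qball_set d A e))}"

definition dist_continuous :: "('a::topological_space \<Rightarrow> 'a \<Rightarrow> real) \<Rightarrow> bool" where
  "dist_continuous d \<longleftrightarrow> (\<forall>A. A \<noteq> {} \<longrightarrow> continuous_on UNIV (dbar_set d A))"

definition dbar :: "('a::topological_space \<Rightarrow> 'a \<Rightarrow> real) \<Rightarrow> 'a \<Rightarrow> 'a \<Rightarrow> real" where
  "dbar d x y = dbar_set d {x} y"

definition dbar_circ :: "('a::topological_space \<Rightarrow> 'a \<Rightarrow> real) \<Rightarrow> 'a \<Rightarrow> 'a \<Rightarrow> real" where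
  "dbar_circ d x y = dbar_circ_set d {x} y"

end

theory Submission
  imports Defs
begin

text \<open>Groups are additive, so d x y = f (-x + y) is the left-invariant quasi-pseudometric of a
  function f on the group. As in the Birkhoff--Kakutani construction, a sequence of open
  neighbourhoods W n of 0 with W (n+1) + W (n+1) + W (n+1) \<subseteq> W n and W 0 \<subseteq> U yields a
  subadditive f \<le> 1 with open sublevel sets and {f < 1} \<subseteq> W 0: f z is the least total weight
  \<Sum> 2^-n_i of a decomposition z = a_1 + ... + a_k with a_i \<in> W n_i. Continuity of right
  translations gives closure B(A, \<delta>) \<subseteq> interior (closure B(A, e)) for \<delta> < e, and this single
  inclusion makes every regularized distance function continuous and forces the two
  regularizations to agree. The regularization of d is again induced by a function g of the same
  kind, so everything applies to it as well. In a balanced group the W n can be chosen invariant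
  under conjugation; then so are f and g, and both quasi-pseudometrics are invariant.\<close>

section \<open>Translations in paratopological groups\<close>

lemma continuous_on_mem_closure:
  assumes "continuous_on UNIV h" and "y \<in> closure S" and "h ` S \<subseteq> closure T"
  shows "h y \<in> closure T"
  using image_closure_subset[OF continuous_on_subset[OF assms(1)] closed_closure assms(3)] assms(2)
  by blast

lemma paratopological_continuous_add_left:
  assumes "paratopological_group TYPE('a::{topological_space,group_add})"
  shows "continuous_on UNIV (\<lambda>y::'a. c + y)"
proof -
  have "continuous_on UNIV (\<lambda>y::'a. fst (c, y) + snd (c, y))"
    using assms unfolding paratopological_group_def
    by (rule continuous_on_compose2) (auto intro!: continuous_intros)
  then show ?thesis by simp
qed

lemma paratopological_continuous_add_right:
  assumes "paratopological_group TYPE('a::{topological_space,group_add})"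
  shows "continuous_on UNIV (\<lambda>y::'a. y + c)"
proof -
  have "continuous_on UNIV (\<lambda>y::'a. fst (y, c) + snd (y, c))"
    using assms unfolding paratopological_group_def
    by (rule continuous_on_compose2) (auto intro!: continuous_intros)
  then show ?thesis by simp
qed

lemma paratopological_continuous_conj:
  assumes "paratopological_group TYPE('a::{topological_space,group_add})"
  shows "continuous_on UNIV (\<lambda>y::'a. -c + y + c)"
  using continuous_on_compose2[OF paratopological_continuous_add_right[OF assms]
      paratopological_continuous_add_left[OF assms]]
  by simp

lemma open_vimage_add_left:
  assumes "paratopological_group TYPE('a::{topological_space,group_add})" and "open S"
  shows "open {y::'a. c + y \<in> S}"
  using open_vimage[OF assms(2) paratopological_continuous_add_left[OF assms(1)]]
  by (simp add: vimage_def)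

lemma mem_closure_image_add_left:
  assumes "paratopological_group TYPE('a::{topological_space,group_add})"
  shows "y \<in> closure ((+) x ` S) \<longleftrightarrow> -x + (y::'a) \<in> closure S"
proof
  assume "y \<in> closure ((+) x ` S)"
  moreover have "(\<lambda>y. -x + y) ` ((+) x ` S) \<subseteq> closure S"
    by (auto simp: add.assoc[symmetric] intro: closure_subset[THEN subsetD])
  ultimately show "-x + y \<in> closure S"
    using continuous_on_mem_closure[OF paratopological_continuous_add_left[OF assms]] by blast
next
  assume "-x + y \<in> closure S"
  then have "x + (-x + y) \<in> closure ((+) x ` S)"
    by (rule continuous_on_mem_closure[OF paratopological_continuous_add_left[OF assms]])
      (auto intro: closure_subset[THEN subsetD])
  then show "y \<in> closure ((+) x ` S)" by (simp add: add.assoc[symmetric])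
qed

section \<open>Regularized distance functions\<close>

lemma qball_set_mono: "e \<le> e' \<Longrightarrow> qball_set d A e \<subseteq> qball_set d A e'"
  by (auto simp: qball_set_def qball_def)

lemma qball_set_singleton: "qball_set d {x} e = qball d x e"
  by (simp add: qball_set_def)

lemma exists_qball_set_radius:
  assumes "A \<noteq> {}"
  shows "\<exists>e>0. x \<in> qball_set d A e"
proof -
  obtain a where "a \<in> A" using assms by blast
  then have "x \<in> qball_set d A (max 1 (d a x + 1))"
    by (auto simp: qball_set_def qball_def intro!: bexI[of _ a])
  then show ?thesis by (intro exI[of _ "max 1 (d a x + 1)"]) auto
qed

lemma dbar_set_le: "0 < e \<Longrightarrow> x \<in> closure (qball_set d A e) \<Longrightarrow> dbar_set d A x \<le> e"
  unfolding dbar_set_def by (rule cInf_lower) (auto intro: bdd_belowI[where m = 0])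

lemma dbar_set_le_dist:
  assumes "a \<in> A" and "0 \<le> d a x"
  shows "dbar_set d A x \<le> d a x"
proof (rule dense_ge)
  fix e assume "d a x < e"
  then have "x \<in> closure (qball_set d A e)"
    using assms(1) by (intro closure_subset[THEN subsetD]) (auto simp: qball_set_def qball_def)
  then show "dbar_set d A x \<le> e" using \<open>d a x < e\<close> assms(2) by (intro dbar_set_le) auto
qed

lemma dbar_set_radii_nonempty:
  "A \<noteq> {} \<Longrightarrow> {e. 0 < e \<and> x \<in> closure (qball_set d A e)} \<noteq> {}"
  using exists_qball_set_radius[of A x d] closure_subset by blast

lemma dbar_set_nonneg: "A \<noteq> {} \<Longrightarrow> 0 \<le> dbar_set d A x"
  unfolding dbar_set_def by (rule cInf_greatest[OF dbar_set_radii_nonempty]) auto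

lemma dbar_set_lessE:
  assumes "A \<noteq> {}" and "dbar_set d A x < b"
  obtains e where "0 < e" "e < b" "x \<in> closure (qball_set d A e)"
  using cInf_lessD[OF dbar_set_radii_nonempty[OF assms(1)]] assms(2)
  unfolding dbar_set_def by blast

lemma dbar_set_ge:
  assumes "A \<noteq> {}" and "x \<notin> closure (qball_set d A c)"
  shows "c \<le> dbar_set d A x"
  unfolding dbar_set_def
proof (rule cInf_greatest[OF dbar_set_radii_nonempty[OF assms(1)]])
  fix e assume "e \<in> {e. 0 < e \<and> x \<in> closure (qball_set d A e)}"
  then show "c \<le> e"
    using assms(2) closure_mono[OF qball_set_mono[of e c]] by (cases "e \<le> c") auto
qed

lemma open_dbar_set_greater:
  assumes "A \<noteq> {}"
  shows "open {x. a < dbar_set d A x}"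
proof (cases "a < 0")
  case True
  then have "{x. a < dbar_set d A x} = UNIV"
    using dbar_set_nonneg[OF assms] by (auto intro: less_le_trans)
  then show ?thesis by simp
next
  case False
  show ?thesis
  proof (subst open_subopen, intro ballI)
    fix x assume x: "x \<in> {x. a < dbar_set d A x}"
    define c where "c = (a + dbar_set d A x) / 2"
    have c: "0 < c" "a < c" "c < dbar_set d A x" using x False by (auto simp: c_def)
    then have "x \<notin> closure (qball_set d A c)" using dbar_set_le by force
    moreover have "- closure (qball_set d A c) \<subseteq> {x. a < dbar_set d A x}"
      using dbar_set_ge[OF assms] c(2) by (force intro: less_le_trans)
    ultimately show "\<exists>T. open T \<and> x \<in> T \<and> T \<subseteq> {x. a < dbar_set d A x}"
      by (intro exI[of _ "- closure (qball_set d A c)"]) auto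
  qed
qed

lemma open_dbar_set_less:
  assumes "A \<noteq> {}"
    and nested: "\<And>\<delta> e. 0 < \<delta> \<Longrightarrow> \<delta> < e \<Longrightarrow>
                    closure (qball_set d A \<delta>) \<subseteq> interior (closure (qball_set d A e))"
  shows "open {x. dbar_set d A x < b}"
proof (subst open_subopen, intro ballI)
  fix x assume "x \<in> {x. dbar_set d A x < b}"
  then obtain e where e: "0 < e" "e < b" "x \<in> closure (qball_set d A e)"
    using dbar_set_lessE[OF assms(1)] by blast
  define e' where "e' = (e + b) / 2"
  have e': "0 < e'" "e < e'" "e' < b" using e by (auto simp: e'_def)
  have "interior (closure (qball_set d A e')) \<subseteq> {x. dbar_set d A x < b}"
    using dbar_set_le[OF e'(1)] e'(3) interior_subset by fastforce
  moreover have "x \<in> interior (closure (qball_set d A e'))" using nested e e' by blast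
  ultimately show "\<exists>T. open T \<and> x \<in> T \<and> T \<subseteq> {x. dbar_set d A x < b}"
    by (intro exI[of _ "interior (closure (qball_set d A e'))"]) auto
qed

lemma continuous_on_dbar_set:
  assumes "A \<noteq> {}"
    and "\<And>\<delta> e. 0 < \<delta> \<Longrightarrow> \<delta> < e \<Longrightarrow>
                closure (qball_set d A \<delta>) \<subseteq> interior (closure (qball_set d A e))"
  shows "continuous_on UNIV (dbar_set d A)"
  using continuous_map_upper_lower_semicontinuous_lt[of euclidean "dbar_set d A"]
    open_dbar_set_greater[OF assms(1)] open_dbar_set_less[OF assms]
  by simp

lemma dbar_circ_set_eq_dbar_set:
  assumes "A \<noteq> {}"
    and nested: "\<And>\<delta> e. 0 < \<delta> \<Longrightarrow> \<delta> < e \<Longrightarrow>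
                    closure (qball_set d A \<delta>) \<subseteq> interior (closure (qball_set d A e))"
  shows "dbar_circ_set d A x = dbar_set d A x"
proof -
  let ?X = "{e. 0 < e \<and> x \<in> closure (qball_set d A e)}"
  let ?Y = "{e. 0 < e \<and> x \<in> qball_set d A e \<union> interior (closure (qball_set d A e))}"
  have Y_ne: "?Y \<noteq> {}" using exists_qball_set_radius[OF assms(1)] by blast
  have Y_bdd: "bdd_below ?Y" by (auto intro: bdd_belowI[where m = 0])
  have "Inf ?X \<le> Inf ?Y"
    using closure_subset interior_subset
    by (intro cInf_superset_mono[OF Y_ne]) (auto intro: bdd_belowI[where m = 0])
  moreover have "Inf ?Y \<le> Inf ?X"
  proof (rule cInf_greatest[OF dbar_set_radii_nonempty[OF assms(1)]])
    fix e assume e: "e \<in> ?X"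
    show "Inf ?Y \<le> e"
    proof (rule dense_ge)
      fix e' assume "e < e'"
      then have "e' \<in> ?Y" using e nested by auto
      then show "Inf ?Y \<le> e'" using Y_bdd by (rule cInf_lower)
    qed
  qed
  ultimately have "Inf ?Y = Inf ?X" by (rule antisym[rotated])
  then show ?thesis by (simp add: dbar_set_def dbar_circ_set_def)
qed

lemma right_continuous_dbar: "dist_continuous d \<Longrightarrow> right_continuous (dbar d)"
  by (simp add: dist_continuous_def right_continuous_def dbar_def)

section \<open>Quasi-pseudometrics induced by prenorms\<close>

definition left_qmetric :: "('a::group_add \<Rightarrow> real) \<Rightarrow> 'a \<Rightarrow> 'a \<Rightarrow> real" where
  "left_qmetric f x y = f (-x + y)"

lemma quasi_pseudometric_left_qmetric:
  assumes "\<And>z. 0 \<le> f z" and "f 0 = 0" and "\<And>a b. f (a + b) \<le> f a + f b"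
  shows "quasi_pseudometric (left_qmetric f)"
  unfolding quasi_pseudometric_def left_qmetric_def
  using assms(3)[of "-x + y" "-y + z" for x y z] by (simp add: assms(1,2) add.assoc)

lemma left_invariant_left_qmetric: "left_invariant (left_qmetric f)"
  by (simp add: left_invariant_def left_qmetric_def minus_add add.assoc[symmetric])

lemma invariant_left_qmetric:
  assumes "\<And>c z. f (-c + z + c) = f z"
  shows "invariant (left_qmetric f)"
proof -
  have "-(x + z) + (y + z) = -z + (-x + y) + z" for x y z :: 'a
    by (simp add: minus_add add.assoc diff_conv_add_uminus del: add_uminus_conv_diff)
  then have "right_invariant (left_qmetric f)"
    by (simp add: right_invariant_def left_qmetric_def assms)
  then show ?thesis by (simp add: invariant_def left_invariant_left_qmetric)
qed

lemma qball_left_qmetric: "qball (left_qmetric f) x e = (+) x ` {z. f z < e}"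
proof (intro set_eqI iffI)
  fix y assume "y \<in> qball (left_qmetric f) x e"
  then show "y \<in> (+) x ` {z. f z < e}"
    by (intro image_eqI[of y _ "-x + y"])
      (simp_all add: qball_def left_qmetric_def add.assoc[symmetric])
qed (auto simp: qball_def left_qmetric_def add.assoc[symmetric])

lemma qball_set_left_qmetric: "qball_set (left_qmetric f) A e = {y. \<exists>a\<in>A. f (-a + y) < e}"
  by (auto simp: qball_set_def qball_def left_qmetric_def)

lemma qball_set_left_qmetric_zero: "qball_set (left_qmetric f) {0} e = {z. f z < e}"
  unfolding qball_set_left_qmetric by simp

definition regularize :: "('a::{topological_space,group_add} \<Rightarrow> real) \<Rightarrow> 'a \<Rightarrow> real" where
  "regularize f = dbar_set (left_qmetric f) {0}"

locale usc_prenorm =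
  fixes f :: "'a::{topological_space,group_add} \<Rightarrow> real"
  assumes paratopological: "paratopological_group TYPE('a)"
    and nonneg: "0 \<le> f z"
    and zero: "f 0 = 0"
    and subadditive: "f (a + b) \<le> f a + f b"
    and open_sublevel: "open {z. f z < e}"
begin

lemma quasi_pseudometric: "quasi_pseudometric (left_qmetric f)"
  using nonneg zero subadditive by (rule quasi_pseudometric_left_qmetric)

lemma closure_qball_set_nested:
  assumes "\<delta> < e"
  shows "closure (qball_set (left_qmetric f) A \<delta>) \<subseteq>
           interior (closure (qball_set (left_qmetric f) A e))"
proof
  fix y assume y: "y \<in> closure (qball_set (left_qmetric f) A \<delta>)"
  let ?T = "{w. -y + w \<in> {z. f z < e - \<delta>}}"
  have "?T \<subseteq> closure (qball_set (left_qmetric f) A e)"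
  proof
    fix w assume "w \<in> ?T"
    then have z: "f (-y + w) < e - \<delta>" by simp
    have "(\<lambda>s. s + (-y + w)) ` qball_set (left_qmetric f) A \<delta> \<subseteq> qball_set (left_qmetric f) A e"
    proof (clarsimp simp: qball_set_left_qmetric)
      fix a s assume "a \<in> A" "f (-a + s) < \<delta>"
      moreover have "f (-a + (s + (-y + w))) \<le> f (-a + s) + f (-y + w)"
        using subadditive[of "-a + s" "-y + w"] by (simp add: add.assoc)
      ultimately show "\<exists>a\<in>A. f (-a + (s + (-y + w))) < e" using z by force
    qed
    then have "y + (-y + w) \<in> closure (qball_set (left_qmetric f) A e)"
      using continuous_on_mem_closure[OF paratopological_continuous_add_right[OF paratopological] y]
        closure_subset by blast
    then show "w \<in> closure (qball_set (left_qmetric f) A e)" by (simp add: add.assoc[symmetric])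
  qed
  moreover have "open ?T" by (rule open_vimage_add_left[OF paratopological open_sublevel])
  moreover have "y \<in> ?T" using zero assms by simp
  ultimately show "y \<in> interior (closure (qball_set (left_qmetric f) A e))"
    by (meson interiorI)
qed

lemma dist_continuous: "dist_continuous (left_qmetric f)"
  unfolding dist_continuous_def
  using continuous_on_dbar_set closure_qball_set_nested by blast

lemma dbar_circ_eq_dbar: "dbar_circ (left_qmetric f) = dbar (left_qmetric f)"
  using dbar_circ_set_eq_dbar_set[of "{_}", OF _ closure_qball_set_nested]
  by (intro ext) (simp add: dbar_circ_def dbar_def)

lemma dbar_eq_left_qmetric_regularize: "dbar (left_qmetric f) = left_qmetric (regularize f)"
proof (intro ext)
  fix x y
  have "y \<in> closure (qball_set (left_qmetric f) {x} e) \<longleftrightarrow> -x + y \<in> closure {z. f z < e}" for e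
    by (simp add: qball_set_singleton qball_left_qmetric
        mem_closure_image_add_left[OF paratopological])
  then show "dbar (left_qmetric f) x y = left_qmetric (regularize f) x y"
    unfolding regularize_def dbar_def dbar_set_def
    by (simp add: qball_set_left_qmetric_zero left_qmetric_def)
qed

lemma regularize_le: "regularize f z \<le> f z"
  using dbar_set_le_dist[of 0 "{0}" "left_qmetric f" z] nonneg
  by (simp add: regularize_def left_qmetric_def)

lemma closure_sublevel_add:
  assumes "a \<in> closure {z. f z < e1}" and "b \<in> closure {z. f z < e2}"
  shows "a + b \<in> closure {z. f z < e1 + e2}"
proof -
  have "s + b \<in> closure {z. f z < e1 + e2}" if "f s < e1" for s
  proof (rule continuous_on_mem_closure[OF
        paratopological_continuous_add_left[OF paratopological] assms(2)])
    show "(+) s ` {z. f z < e2} \<subseteq> closure {z. f z < e1 + e2}"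
    proof
      fix w assume "w \<in> (+) s ` {z. f z < e2}"
      then obtain t where "f t < e2" "w = s + t" by blast
      then have "f w < e1 + e2" using that subadditive[of s t] by simp
      then show "w \<in> closure {z. f z < e1 + e2}" by (auto intro: closure_subset[THEN subsetD])
    qed
  qed
  then show ?thesis
    by (intro continuous_on_mem_closure[OF
          paratopological_continuous_add_right[OF paratopological] assms(1)]) auto
qed

lemma regularize_nonneg: "0 \<le> regularize f z"
  unfolding regularize_def by (rule dbar_set_nonneg) simp

lemma usc_prenorm_regularize: "usc_prenorm (regularize f)"
proof
  fix z a b e
  show "0 \<le> regularize f z" by (rule regularize_nonneg)
  show "regularize f 0 = 0" using regularize_le[of 0] regularize_nonneg[of 0] zero by simp
  have "continuous_on UNIV (regularize f)"
    unfolding regularize_def using continuous_on_dbar_set closure_qball_set_nested by blast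
  then show "open {z. regularize f z < e}" by (intro open_Collect_less) auto
  show "regularize f (a + b) \<le> regularize f a + regularize f b"
  proof (rule field_le_epsilon)
    fix \<epsilon> :: real assume "0 < \<epsilon>"
    have "regularize f x < regularize f x + \<epsilon> / 2" for x using \<open>0 < \<epsilon>\<close> by simp
    then obtain e1 e2 where
      e1: "0 < e1" "e1 < regularize f a + \<epsilon> / 2" "a \<in> closure {z. f z < e1}" and
      e2: "0 < e2" "e2 < regularize f b + \<epsilon> / 2" "b \<in> closure {z. f z < e2}"
      unfolding regularize_def
      by (metis dbar_set_lessE[OF insert_not_empty] qball_set_left_qmetric_zero)
    have "regularize f (a + b) \<le> e1 + e2"
      using dbar_set_le[of "e1 + e2" "a + b" "left_qmetric f" "{0}"]
        closure_sublevel_add[OF e1(3) e2(3)] e1(1) e2(1)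
      by (simp add: regularize_def qball_set_left_qmetric_zero)
    then show "regularize f (a + b) \<le> regularize f a + regularize f b + \<epsilon>" using e1 e2 by simp
  qed
qed (rule paratopological)

lemma regularize_less_imp_interior:
  assumes "regularize f z < e"
  shows "z \<in> interior (closure {w. f w < e})"
proof -
  have "dbar_set (left_qmetric f) {0} z < e" using assms by (simp add: regularize_def)
  then obtain \<delta> where "\<delta> < e" "z \<in> closure (qball_set (left_qmetric f) {0} \<delta>)"
    by (rule dbar_set_lessE[OF insert_not_empty])
  then show ?thesis
    using closure_qball_set_nested[of \<delta> e "{0}"] by (auto simp: qball_set_left_qmetric_zero)
qed

lemma regularize_conj:
  assumes conj: "\<And>c z. f (-c + z + c) = f z"
  shows "regularize f (-c + z + c) = regularize f z"
proof -
  have closure_conj: "-c + y + c \<in> closure {w. f w < e}" if "y \<in> closure {w. f w < e}" for c y e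
    by (rule continuous_on_mem_closure[OF paratopological_continuous_conj[OF paratopological] that])
      (auto simp: conj intro: closure_subset[THEN subsetD])
  have "- (-c) + (-c + z + c) + (-c) = z" by (simp add: add.assoc)
  then have "z \<in> closure {w. f w < e} \<longleftrightarrow> -c + z + c \<in> closure {w. f w < e}" for e
    using closure_conj[of z e c] closure_conj[of "-c + z + c" e "-c"] by metis
  then show ?thesis
    by (simp add: regularize_def dbar_set_def qball_set_left_qmetric_zero)
qed

end

section \<open>Prenorms from chains of neighbourhoods\<close>

lemma sum_list_threshold_split:
  fixes w :: "'b \<Rightarrow> real"
  assumes "0 \<le> h" and "xs \<noteq> []"
  shows "\<exists>ys x zs. xs = ys @ x # zs \<and> (\<Sum>y\<leftarrow>ys. w y) \<le> h \<and>
           (zs = [] \<or> h < (\<Sum>y\<leftarrow>ys. w y) + w x)"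
  using assms
proof (induction xs arbitrary: h)
  case (Cons x xs)
  show ?case
  proof (cases "h < w x \<or> xs = []")
    case True
    then show ?thesis using Cons.prems(1) by (intro exI[of _ "[]"]) auto
  next
    case False
    then obtain ys y zs where "xs = ys @ y # zs" "(\<Sum>v\<leftarrow>ys. w v) \<le> h - w x"
        "zs = [] \<or> h - w x < (\<Sum>v\<leftarrow>ys. w v) + w y"
      using Cons.IH[of "h - w x"] by auto
    then show ?thesis by (intro exI[of _ "x # ys"]) auto
  qed
qed simp

lemma sum_list_split_halves:
  fixes w :: "'b \<Rightarrow> real"
  assumes "\<And>x. x \<in> set xs \<Longrightarrow> 0 \<le> w x" and "xs \<noteq> []" and "(\<Sum>x\<leftarrow>xs. w x) \<le> 2 * h"
  shows "\<exists>ys x zs. xs = ys @ x # zs \<and> (\<Sum>y\<leftarrow>ys. w y) \<le> h \<and> (\<Sum>z\<leftarrow>zs. w z) \<le> h"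
proof -
  have total: "0 \<le> (\<Sum>x\<leftarrow>xs. w x)" by (rule sum_list_nonneg) (use assms(1) in auto)
  then obtain ys x zs where split: "xs = ys @ x # zs" "(\<Sum>y\<leftarrow>ys. w y) \<le> h"
      "zs = [] \<or> h < (\<Sum>y\<leftarrow>ys. w y) + w x"
    using sum_list_threshold_split[of h xs w] assms(2,3) by auto
  moreover have "(\<Sum>z\<leftarrow>zs. w z) \<le> h"
    using split assms(3) total by auto
  ultimately show ?thesis by blast
qed

definition chain_weight :: "('a \<times> nat) list \<Rightarrow> real" where
  "chain_weight l = (\<Sum>p\<leftarrow>l. (1/2) ^ snd p)"

definition chain_sum :: "('a::monoid_add \<times> nat) list \<Rightarrow> 'a" where
  "chain_sum l = (\<Sum>p\<leftarrow>l. fst p)"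

lemma chain_weight_nonneg: "0 \<le> chain_weight l"
  unfolding chain_weight_def by (rule sum_list_nonneg) auto

lemma chain_weight_pos: "l \<noteq> [] \<Longrightarrow> 0 < chain_weight l"
  using chain_weight_nonneg by (cases l) (auto simp: chain_weight_def intro!: add_pos_nonneg)

locale nbhd_chain =
  fixes W :: "nat \<Rightarrow> 'a::{topological_space,group_add} set"
  assumes paratopological: "paratopological_group TYPE('a)"
    and open_W: "open (W n)"
    and zero_W: "0 \<in> W n"
    and triple_W: "a \<in> W (Suc n) \<Longrightarrow> b \<in> W (Suc n) \<Longrightarrow> c \<in> W (Suc n) \<Longrightarrow> a + b + c \<in> W n"
begin

definition admissible :: "('a \<times> nat) list \<Rightarrow> bool" where
  "admissible l \<longleftrightarrow> (\<forall>p\<in>set l. fst p \<in> W (snd p))"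

lemma W_antimono: "m \<le> n \<Longrightarrow> W n \<subseteq> W m"
proof (rule lift_Suc_antimono_le[of W])
  show "W (Suc n) \<subseteq> W n" for n using triple_W[OF _ zero_W zero_W, of _ n] by auto
qed

lemma chain_sum_mem_split:
  assumes "fst p \<in> W (snd p)" and "chain_weight (ys @ p # zs) \<le> (1/2) ^ m"
    and "chain_sum ys \<in> W (Suc m)" and "chain_sum zs \<in> W (Suc m)"
  shows "chain_sum (ys @ p # zs) \<in> W m"
proof -
  have weight: "chain_weight ys + (1/2) ^ snd p + chain_weight zs \<le> (1/2) ^ m"
    using assms(2) by (simp add: chain_weight_def)
  have sum: "chain_sum (ys @ p # zs) = chain_sum ys + fst p + chain_sum zs"
    by (simp add: chain_sum_def add.assoc)
  show ?thesis
  proof (cases "snd p = m")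
    case True
    then have "chain_weight ys \<le> 0" "chain_weight zs \<le> 0"
      using weight chain_weight_nonneg[of ys] chain_weight_nonneg[of zs] by simp_all
    then have "ys = []" "zs = []" by (meson chain_weight_pos not_le)+
    then show ?thesis using assms(1) True by (simp add: chain_sum_def)
  next
    case False
    have "(1/2::real) ^ snd p \<le> (1/2) ^ m"
      using weight chain_weight_nonneg[of ys] chain_weight_nonneg[of zs] by linarith
    then have "Suc m \<le> snd p" using False by simp
    then have "fst p \<in> W (Suc m)" using assms(1) W_antimono by blast
    then show ?thesis using sum triple_W assms(3,4) by simp
  qed
qed

lemma chain_sum_mem:
  assumes "admissible l" and "chain_weight l \<le> (1/2) ^ m"
  shows "chain_sum l \<in> W m"
  using assms
proof (induction "length l" arbitrary: l m rule: less_induct)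
  case less
  show ?case
  proof (cases "l = []")
    case True
    then show ?thesis using zero_W by (simp add: chain_sum_def)
  next
    case False
    have "chain_weight l \<le> 2 * (1/2) ^ Suc m" using less.prems(2) by simp
    then have "\<exists>ys p zs. l = ys @ p # zs \<and>
        chain_weight ys \<le> (1/2) ^ Suc m \<and> chain_weight zs \<le> (1/2) ^ Suc m"
      unfolding chain_weight_def by (intro sum_list_split_halves) (use False in auto)
    then obtain ys p zs where l: "l = ys @ p # zs"
        and ys: "chain_weight ys \<le> (1/2) ^ Suc m" and zs: "chain_weight zs \<le> (1/2) ^ Suc m"
      by blast
    have "admissible ys" "fst p \<in> W (snd p)" "admissible zs"
      using less.prems(1) by (auto simp: admissible_def l)
    then show ?thesis
      using less.hyps ys zs less.prems(2) by (auto simp: l intro!: chain_sum_mem_split)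
  qed
qed

text \<open>The value 1 is included so that the infimum is taken over a nonempty set even when no
  admissible chain sums to the argument; it also bounds the prenorm by 1.\<close>

definition chain_prenorm :: "'a \<Rightarrow> real" where
  "chain_prenorm z = Inf (insert 1 {chain_weight l |l. admissible l \<and> chain_sum l = z})"

lemma chain_prenorm_bdd: "bdd_below (insert 1 {chain_weight l |l. admissible l \<and> chain_sum l = z})"
  by (auto intro: bdd_belowI[where m = 0] chain_weight_nonneg)

lemma chain_prenorm_le_one: "chain_prenorm z \<le> 1"
  unfolding chain_prenorm_def by (rule cInf_lower[OF _ chain_prenorm_bdd]) simp

lemma chain_prenorm_le_weight: "admissible l \<Longrightarrow> chain_prenorm (chain_sum l) \<le> chain_weight l"
  unfolding chain_prenorm_def by (rule cInf_lower[OF _ chain_prenorm_bdd]) auto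

lemma chain_prenorm_nonneg: "0 \<le> chain_prenorm z"
  unfolding chain_prenorm_def by (rule cInf_greatest) (auto simp: chain_weight_nonneg)

lemma chain_prenorm_lessD:
  assumes "chain_prenorm z < e"
  shows "1 < e \<or> (\<exists>l. admissible l \<and> chain_sum l = z \<and> chain_weight l < e)"
  using cInf_lessD[of "insert 1 {chain_weight l |l. admissible l \<and> chain_sum l = z}" e] assms
  unfolding chain_prenorm_def by auto

lemma chain_prenorm_less_one: "chain_prenorm z < 1 \<Longrightarrow> z \<in> W 0"
  using chain_prenorm_lessD chain_sum_mem[of _ 0] by fastforce

lemma chain_prenorm_subadditive: "chain_prenorm (a + b) \<le> chain_prenorm a + chain_prenorm b"
proof (rule field_le_epsilon)
  fix \<epsilon> :: real assume "0 < \<epsilon>"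
  have small: "chain_prenorm x < chain_prenorm x + \<epsilon> / 2" for x using \<open>0 < \<epsilon>\<close> by simp
  show "chain_prenorm (a + b) \<le> chain_prenorm a + chain_prenorm b + \<epsilon>"
  proof (cases "1 < chain_prenorm a + \<epsilon> / 2 \<or> 1 < chain_prenorm b + \<epsilon> / 2")
    case True
    then show ?thesis
      using chain_prenorm_le_one[of "a + b"] chain_prenorm_nonneg[of a] chain_prenorm_nonneg[of b]
      using \<open>0 < \<epsilon>\<close> by (elim disjE) linarith+
  next
    case False
    then obtain la lb where
      la: "admissible la" "chain_sum la = a" "chain_weight la < chain_prenorm a + \<epsilon> / 2" and
      lb: "admissible lb" "chain_sum lb = b" "chain_weight lb < chain_prenorm b + \<epsilon> / 2"
      using chain_prenorm_lessD[OF small] by blast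
    have "chain_prenorm (chain_sum (la @ lb)) \<le> chain_weight (la @ lb)"
      using la lb by (intro chain_prenorm_le_weight) (auto simp: admissible_def)
    then show ?thesis using la lb by (simp add: chain_sum_def chain_weight_def)
  qed
qed

lemma open_chain_prenorm_sublevel: "open {z. chain_prenorm z < e}"
proof (subst open_subopen, intro ballI)
  fix z assume "z \<in> {z. chain_prenorm z < e}"
  then consider "1 < e" | l where "admissible l" "chain_sum l = z" "chain_weight l < e"
    using chain_prenorm_lessD by blast
  then show "\<exists>T. open T \<and> z \<in> T \<and> T \<subseteq> {z. chain_prenorm z < e}"
  proof cases
    case 1
    then show ?thesis
      using chain_prenorm_le_one by (intro exI[of _ UNIV]) (auto intro: le_less_trans)
  next
    case 2
    obtain n where n: "(1/2::real) ^ n < e - chain_weight l"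
      using real_arch_pow_inv[of "e - chain_weight l" "1/2"] 2 by auto
    have "chain_prenorm y < e" if "-z + y \<in> W n" for y
    proof -
      have "chain_prenorm (chain_sum (l @ [(-z + y, n)])) \<le> chain_weight (l @ [(-z + y, n)])"
        using 2 that by (intro chain_prenorm_le_weight) (auto simp: admissible_def)
      then show ?thesis
        using 2 n by (simp add: chain_sum_def chain_weight_def add.assoc[symmetric])
    qed
    moreover have "open {y. -z + y \<in> W n}" by (rule open_vimage_add_left[OF paratopological open_W])
    ultimately show ?thesis using zero_W by (intro exI[of _ "{y. -z + y \<in> W n}"]) auto
  qed
qed

lemma usc_prenorm_chain_prenorm: "usc_prenorm chain_prenorm"
proof
  show "chain_prenorm 0 = 0"
    using chain_prenorm_le_weight[of "[]"] chain_prenorm_nonneg[of 0]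
    by (simp add: admissible_def chain_sum_def chain_weight_def)
qed (use paratopological chain_prenorm_nonneg chain_prenorm_subadditive
      open_chain_prenorm_sublevel in auto)

lemma chain_prenorm_conj_le:
  assumes "\<And>n c w. w \<in> W n \<Longrightarrow> -c + w + c \<in> W n"
  shows "chain_prenorm (-c + z + c) \<le> chain_prenorm z"
  unfolding chain_prenorm_def[of z]
proof (rule cInf_greatest)
  fix s assume "s \<in> insert 1 {chain_weight l |l. admissible l \<and> chain_sum l = z}"
  then consider "s = 1" | l where "admissible l" "chain_sum l = z" "s = chain_weight l" by blast
  then show "chain_prenorm (-c + z + c) \<le> s"
  proof cases
    case 1
    then show ?thesis by (simp add: chain_prenorm_le_one)
  next
    case 2
    let ?m = "map (\<lambda>p. (-c + fst p + c, snd p)) l"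
    have "chain_sum ?m = -c + chain_sum l + c"
      by (induction l) (simp_all add: chain_sum_def add.assoc)
    moreover have "chain_weight ?m = chain_weight l"
      by (simp add: chain_weight_def comp_def)
    moreover have "admissible ?m" using 2 assms by (auto simp: admissible_def)
    ultimately show ?thesis using 2 chain_prenorm_le_weight[of ?m] by simp
  qed
qed simp

lemma chain_prenorm_conj:
  assumes "\<And>n c w. w \<in> W n \<Longrightarrow> -c + w + c \<in> W n"
  shows "chain_prenorm (-c + z + c) = chain_prenorm z"
proof (rule antisym)
  show "chain_prenorm (-c + z + c) \<le> chain_prenorm z" using assms by (rule chain_prenorm_conj_le)
  have "- (-c) + (-c + z + c) + (-c) = z" by (simp add: add.assoc)
  then show "chain_prenorm z \<le> chain_prenorm (-c + z + c)"
    using chain_prenorm_conj_le[OF assms, of "-c" "-c + z + c"] by simp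
qed

end

lemma exists_nbhd_add_subset:
  assumes "paratopological_group TYPE('a::{topological_space,group_add})"
    and "open N" and "(0::'a) \<in> N"
  shows "\<exists>V. open V \<and> 0 \<in> V \<and> (\<forall>a\<in>V. \<forall>b\<in>V. a + b \<in> N)"
proof -
  have "open ((\<lambda>p::'a \<times> 'a. fst p + snd p) -` N)"
    using assms unfolding paratopological_group_def by (intro open_vimage) auto
  moreover have "(0, 0) \<in> (\<lambda>p::'a \<times> 'a. fst p + snd p) -` N" using assms(3) by simp
  ultimately obtain A B where "open A" "open B" "(0, 0) \<in> A \<times> B"
      "A \<times> B \<subseteq> (\<lambda>p::'a \<times> 'a. fst p + snd p) -` N"
    by (rule open_prod_elim)
  then show ?thesis by (intro exI[of _ "A \<inter> B"]) auto
qed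

lemma exists_nbhd_triple_add_subset:
  assumes "paratopological_group TYPE('a::{topological_space,group_add})"
    and "open N" and "(0::'a) \<in> N"
  shows "\<exists>V. open V \<and> 0 \<in> V \<and> (\<forall>a\<in>V. \<forall>b\<in>V. \<forall>c\<in>V. a + b + c \<in> N)"
proof -
  obtain V1 where V1: "open V1" "0 \<in> V1" "\<forall>a\<in>V1. \<forall>b\<in>V1. a + b \<in> N"
    using exists_nbhd_add_subset[OF assms] by blast
  obtain V2 where V2: "open V2" "0 \<in> V2" "\<forall>a\<in>V2. \<forall>b\<in>V2. a + b \<in> V1"
    using exists_nbhd_add_subset[OF assms(1) V1(1,2)] by blast
  have "a + b + c \<in> N" if "a \<in> V1 \<inter> V2" "b \<in> V1 \<inter> V2" "c \<in> V1 \<inter> V2" for a b c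
    using V1(3) V2(3) that by (simp add: add.assoc)
  then show ?thesis using V1 V2 by (intro exI[of _ "V1 \<inter> V2"]) auto
qed

lemma balanced_exists_conj_invariant_nbhd:
  assumes "balanced_group TYPE('a::{topological_space,group_add})"
    and "open N" and "(0::'a) \<in> N"
  shows "\<exists>V. open V \<and> 0 \<in> V \<and> V \<subseteq> N \<and> (\<forall>c. \<forall>w\<in>V. -c + w + c \<in> V)"
proof -
  obtain V where V: "open V" "0 \<in> V" "V \<subseteq> N" "\<forall>x. (\<lambda>v. x + v) ` V = (\<lambda>v. v + x) ` V"
    using assms(1)[unfolded balanced_group_def, rule_format, OF conjI[OF assms(2,3)]] by blast
  have "-c + w + c \<in> V" if "w \<in> V" for c w
  proof -
    have "w + c \<in> (\<lambda>v. c + v) ` V" using that V(4) by blast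
    then obtain v where "v \<in> V" "w + c = c + v" by blast
    then show ?thesis by (simp add: add.assoc)
  qed
  then show ?thesis using V by blast
qed

lemma exists_nbhd_chain_step:
  assumes "paratopological_group TYPE('a::{topological_space,group_add})"
    and "open N" and "(0::'a) \<in> N"
  shows "\<exists>V. open V \<and> 0 \<in> V \<and> V \<subseteq> N \<and> (\<forall>a\<in>V. \<forall>b\<in>V. \<forall>c\<in>V. a + b + c \<in> N) \<and>
           (balanced_group TYPE('a) \<longrightarrow> (\<forall>c. \<forall>w\<in>V. -c + w + c \<in> V))"
proof -
  obtain V where V: "open V" "0 \<in> V" "\<forall>a\<in>V. \<forall>b\<in>V. \<forall>c\<in>V. a + b + c \<in> N"
    using exists_nbhd_triple_add_subset[OF assms] by blast
  obtain V' where V': "open V'" "0 \<in> V'" "V' \<subseteq> V"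
      "balanced_group TYPE('a) \<Longrightarrow> \<forall>c. \<forall>w\<in>V'. -c + w + c \<in> V'"
    using balanced_exists_conj_invariant_nbhd[OF _ V(1,2)] V(1,2)
    by (cases "balanced_group TYPE('a)") auto
  have "a \<in> N" if "a \<in> V'" for a
    using V(3) V'(2,3) that by (metis add_0_right subsetD)
  then show ?thesis using V V' by (intro exI[of _ V']) blast
qed

lemma exists_nbhd_chain:
  assumes "paratopological_group TYPE('a::{topological_space,group_add})"
    and "(0::'a) \<in> interior U"
  shows "\<exists>W. nbhd_chain W \<and> W 0 \<subseteq> U \<and>
           (balanced_group TYPE('a) \<longrightarrow> (\<forall>n c w. w \<in> W n \<longrightarrow> -c + w + c \<in> W n))"
proof -
  let ?P = "\<lambda>(n::nat) V. open V \<and> (0::'a) \<in> V \<and> V \<subseteq> interior U \<and>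
                (balanced_group TYPE('a) \<longrightarrow> (\<forall>c. \<forall>w\<in>V. -c + w + c \<in> V))"
  let ?Q = "\<lambda>(n::nat) V V'. \<forall>a\<in>V'. \<forall>b\<in>V'. \<forall>c\<in>V'. a + b + c \<in> V"
  have "\<exists>W. \<forall>n. ?P n (W n) \<and> ?Q n (W n) (W (Suc n))"
  proof (rule dependent_nat_choice)
    show "\<exists>V. ?P 0 V" using exists_nbhd_chain_step[OF assms(1) open_interior assms(2)] by blast
    show "\<exists>V'. ?P (Suc n) V' \<and> ?Q n V V'" if "?P n V" for V n
    proof -
      from that have V: "open V" "0 \<in> V" "V \<subseteq> interior U" by auto
      then obtain V' where "open V'" "0 \<in> V'" "V' \<subseteq> V" "\<forall>a\<in>V'. \<forall>b\<in>V'. \<forall>c\<in>V'. a + b + c \<in> V"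
          "balanced_group TYPE('a) \<longrightarrow> (\<forall>c. \<forall>w\<in>V'. -c + w + c \<in> V')"
        using exists_nbhd_chain_step[OF assms(1) V(1,2)] by blast
      then show ?thesis using V(3) by (intro exI[of _ V']) auto
    qed
  qed
  then obtain W where W: "\<forall>n. ?P n (W n) \<and> ?Q n (W n) (W (Suc n))" ..
  have "nbhd_chain W"
    by unfold_locales (use assms(1) W in \<open>simp_all add: Ball_def\<close>)
  moreover have "W 0 \<subseteq> U" using W interior_subset by blast
  ultimately show ?thesis using W by (intro exI[of _ W]) simp
qed

lemma exists_usc_prenorm_sublevel_subset:
  assumes "paratopological_group TYPE('a::{topological_space,group_add})"
    and "(0::'a) \<in> interior U"
  shows "\<exists>f. usc_prenorm f \<and> (\<forall>z. f z \<le> 1) \<and> {z. f z < 1} \<subseteq> U \<and>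
           (balanced_group TYPE('a) \<longrightarrow> (\<forall>c z. f (-c + z + c) = f z))"
proof -
  obtain W where W: "nbhd_chain W" "W 0 \<subseteq> U"
      "balanced_group TYPE('a) \<Longrightarrow> \<forall>n c w. w \<in> W n \<longrightarrow> -c + w + c \<in> W n"
    using exists_nbhd_chain[OF assms] by blast
  interpret nbhd_chain W by (fact W(1))
  show ?thesis
    using usc_prenorm_chain_prenorm chain_prenorm_le_one chain_prenorm_less_one W(2,3)
      chain_prenorm_conj
    by (intro exI[of _ chain_prenorm]) blast
qed

theorem theorem7p4:
  fixes U :: "'a::{topological_space,group_add} set"
  assumes "paratopological_group TYPE('a)"
    and "0 \<in> interior U"
  shows "\<exists>d::'a \<Rightarrow> 'a \<Rightarrow> real.
           quasi_pseudometric d \<and> (\<forall>x y. d x y \<le> 1) \<and>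
           left_invariant d \<and> dist_continuous d \<and>
           dbar d = dbar_circ d \<and>
           quasi_pseudometric (dbar d) \<and> left_invariant (dbar d) \<and>
           right_continuous (dbar d) \<and> dist_continuous (dbar d) \<and>
           (\<forall>x. qball d x 1 \<subseteq> (\<lambda>u. x + u) ` U) \<and>
           (\<forall>x. qball (dbar d) x 1 \<subseteq> (\<lambda>u. x + u) ` interior (closure U)) \<and>
           (balanced_group TYPE('a) \<longrightarrow> invariant d \<and> invariant (dbar d))"
proof -
  obtain f where f: "usc_prenorm f" "\<forall>z. f z \<le> 1" "{z. f z < 1} \<subseteq> U"
      "balanced_group TYPE('a) \<Longrightarrow> \<forall>c z. f (-c + z + c) = f z"
    using exists_usc_prenorm_sublevel_subset[OF assms] by blast
  interpret usc_prenorm f by (fact f(1))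
  interpret reg: usc_prenorm "regularize f" by (rule usc_prenorm_regularize)
  have "{z. regularize f z < 1} \<subseteq> interior (closure U)"
    using regularize_less_imp_interior interior_mono[OF closure_mono[OF f(3)]] by blast
  then show ?thesis
    using f(2,3) quasi_pseudometric reg.quasi_pseudometric dist_continuous reg.dist_continuous
      right_continuous_dbar[OF dist_continuous]
    by (intro exI[of _ "left_qmetric f"])
      (auto simp: dbar_eq_left_qmetric_regularize dbar_circ_eq_dbar left_invariant_left_qmetric
        qball_left_qmetric left_qmetric_def f(4) regularize_conj intro!: invariant_left_qmetric)
qed

end
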